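(* Let $G$ be a finite group and $p$ a prime. If $|G'\cap Z(G)|=p$ and $C_G(G')$ is non-abelian, then there is a positive integer $s$ such that $C_G(G')/Z(C_G(G'))\cong (C_p\times C_p)^s$ and $$\Pr(C_G(G'))=\frac{1}{p}\left(1+\frac{p-1}{p^{2s}}\right).$$
   Context: $G'$ is the commutator subgroup, $Z(\cdot)$ the center, $C_G(G')$ the centralizer of $G'$ in $G$. For a finite group $H$, $\Pr(H)=\frac{|\{(x,y)\in H\times H : xy=yx\}|}{|H|^2}$. $(C_p\times C_p)^s$ is the direct product of $s$ copies of $C_p\times C_p$. *)

theory Defs
  imports "HOL-Algebra.Algebra"
begin

definition center :: "('a, 'b) monoid_scheme \<Rightarrow> 'a set" where
  "center G = {z \<in> carrier G. \<forall>g \<in> carrier G. z \<otimes>\<^bsub>G\<^esub> g = g \<otimes>\<^bsub>G\<^esub> z}"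

definition centralizer :: "('a, 'b) monoid_scheme \<Rightarrow> 'a set \<Rightarrow> 'a set" where
  "centralizer G H = {g \<in> carrier G. \<forall>h \<in> H. g \<otimes>\<^bsub>G\<^esub> h = h \<otimes>\<^bsub>G\<^esub> g}"

definition comm_prob :: "('a, 'b) monoid_scheme \<Rightarrow> real" where
  "comm_prob H = real (card {(x, y). x \<in> carrier H \<and> y \<in> carrier H \<and> x \<otimes>\<^bsub>H\<^esub> y = y \<otimes>\<^bsub>H\<^esub> x})
                 / (real (card (carrier H)))^2"

end

theory Submission
  imports Defs
begin

text \<open>Let \<open>C = C\<^sub>G(G')\<close>. Conjugating elements of \<open>C\<close> only changes them by factors from \<open>G'\<close>,
  which commute with \<open>C\<close>; hence commutators of elements of \<open>C\<close> are central in \<open>G\<close> and lie in the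
  group \<open>K = G' \<inter> Z(G)\<close> of order \<open>p\<close>. The commutator map is therefore biadditive on \<open>C\<close> and
  induces a nondegenerate alternating form \<open>C/Z(C) \<times> C/Z(C) \<rightarrow> K\<close>. Splitting off hyperbolic
  pairs one at a time shows \<open>C/Z(C) \<cong> (C\<^sub>p \<times> C\<^sub>p)\<^sup>s\<close>, and \<open>s > 0\<close> because \<open>C\<close> is not abelian.
  For \<open>x \<notin> Z(C)\<close> the map \<open>y \<mapsto> [x, y]\<close> is onto \<open>K\<close>, so \<open>C\<^sub>C(x)\<close> has index \<open>p\<close>; counting
  commuting pairs row by row gives \<open>Pr(C) = (1 + (p - 1) / p^(2s)) / p\<close>.\<close>

section \<open>Centralizers and the commuting probability\<close>

lemma (in group) inv_mult_cancel_left [simp]: "\<lbrakk>x \<in> carrier G; y \<in> carrier G\<rbrakk> \<Longrightarrow> inv x \<otimes> (x \<otimes> y) = y"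
  by (simp flip: m_assoc)

lemma (in group) mult_inv_cancel_left [simp]: "\<lbrakk>x \<in> carrier G; y \<in> carrier G\<rbrakk> \<Longrightarrow> x \<otimes> (inv x \<otimes> y) = y"
  by (simp flip: m_assoc)

lemma (in group) commute_inv_left:
  assumes "x \<in> carrier G" and "y \<in> carrier G" and "x \<otimes> y = y \<otimes> x"
  shows "inv x \<otimes> y = y \<otimes> inv x"
proof -
  have "inv x \<otimes> y = inv x \<otimes> (y \<otimes> x) \<otimes> inv x" using assms(1,2) by (simp add: m_assoc)
  also have "\<dots> = inv x \<otimes> (x \<otimes> y) \<otimes> inv x" using assms(3) by simp
  also have "\<dots> = y \<otimes> inv x" using assms(1,2) by (simp flip: m_assoc)
  finally show ?thesis .
qed

lemma (in group) centralizer_subgroup: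
  assumes "H \<subseteq> carrier G"
  shows "subgroup (centralizer G H) G"
proof (rule subgroupI)
  fix x assume x: "x \<in> centralizer G H"
  show "inv x \<in> centralizer G H"
  proof (unfold centralizer_def, intro CollectI conjI ballI)
    fix h assume h: "h \<in> H"
    have "x \<in> carrier G" "h \<in> carrier G" "x \<otimes> h = h \<otimes> x" using x h assms by (auto simp: centralizer_def)
    then show "inv x \<otimes> h = h \<otimes> inv x" by (rule commute_inv_left)
  qed (use x in \<open>simp add: centralizer_def\<close>)
next
  fix x y assume x: "x \<in> centralizer G H" and y: "y \<in> centralizer G H"
  show "x \<otimes> y \<in> centralizer G H"
  proof (unfold centralizer_def, intro CollectI conjI ballI)
    fix h assume h: "h \<in> H"
    have "x \<in> carrier G" "y \<in> carrier G" "h \<in> carrier G" "x \<otimes> h = h \<otimes> x" "y \<otimes> h = h \<otimes> y"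
      using x y h assms by (auto simp: centralizer_def)
    then show "x \<otimes> y \<otimes> h = h \<otimes> (x \<otimes> y)" by (metis m_assoc)
  qed (use x y in \<open>simp add: centralizer_def\<close>)
qed (use assms in \<open>force simp: centralizer_def\<close>)+

lemma (in group) center_subgroup: "subgroup (center G) G"
  using centralizer_subgroup[of "carrier G"] by (simp add: center_def centralizer_def)

lemma (in group) center_normal: "center G \<lhd> G"
  unfolding normal_inv_iff
proof (intro conjI ballI center_subgroup)
  fix x h assume x: "x \<in> carrier G" and h: "h \<in> center G"
  then have "x \<otimes> h \<otimes> inv x = h" by (simp add: center_def m_assoc)
  then show "x \<otimes> h \<otimes> inv x \<in> center G" using h by simp
qed

lemma comm_prob_from_centralizer_index:
  assumes "group H" and "finite (carrier H)" and "p > 0"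
    and index: "\<And>x. x \<in> carrier H - center H \<Longrightarrow> p * card (centralizer H {x}) = card (carrier H)"
    and quotient: "card (carrier H) = q * card (center H)"
  shows "comm_prob H = 1 / real p * (1 + (real p - 1) / real q)"
proof -
  let ?n = "real (card (carrier H))" and ?z = "real (card (center H))"
  have Z_sub: "center H \<subseteq> carrier H" by (auto simp: center_def)
  have fin_Z: "finite (center H)" using assms(2) Z_sub finite_subset by blast
  have "\<one>\<^bsub>H\<^esub> \<in> center H"
    using group.center_subgroup[OF assms(1)] by (rule subgroup.one_closed)
  then have z_pos: "?z > 0" using fin_Z by (auto simp: card_gt_0_iff)
  have "card (carrier H) > 0"
    using assms(2) \<open>\<one>\<^bsub>H\<^esub> \<in> center H\<close> Z_sub by (auto simp: card_gt_0_iff)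
  then have q_pos: "q > 0" using quotient by (cases q) auto
  have pairs: "{(x, y). x \<in> carrier H \<and> y \<in> carrier H \<and> x \<otimes>\<^bsub>H\<^esub> y = y \<otimes>\<^bsub>H\<^esub> x}
      = Sigma (carrier H) (\<lambda>x. centralizer H {x})"
    by (auto simp: centralizer_def)
  have central: "real (card (centralizer H {x})) = ?n" if "x \<in> center H" for x
  proof -
    have "centralizer H {x} = carrier H" using that by (auto simp: centralizer_def center_def)
    then show ?thesis by simp
  qed
  have noncentral: "real (card (centralizer H {x})) = ?n / real p" if "x \<in> carrier H - center H" for x
    using index[OF that] assms(3) by (simp add: field_simps flip: of_nat_mult)
  have "real (card (Sigma (carrier H) (\<lambda>x. centralizer H {x})))
      = (\<Sum>x\<in>carrier H - center H. real (card (centralizer H {x})))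
        + (\<Sum>x\<in>center H. real (card (centralizer H {x})))"
    using assms(2) Z_sub
    by (simp add: card_SigmaI centralizer_def sum.subset_diff[where B = "center H"] flip: of_nat_sum)
  also have "\<dots> = (?n - ?z) * (?n / real p) + ?z * ?n"
    using assms(2) Z_sub fin_Z by (simp add: noncentral central card_Diff_subset of_nat_diff card_mono)
  finally have count: "real (card (Sigma (carrier H) (\<lambda>x. centralizer H {x})))
      = (?n - ?z) * (?n / real p) + ?z * ?n" .
  have n_eq: "?n = real q * ?z" using quotient by simp
  show ?thesis
    unfolding comm_prob_def pairs count n_eq using z_pos q_pos assms(3)
    by (simp add: field_simps power2_eq_square)
qed

section \<open>Alternating forms with values in a group of prime order\<close>

lemma bij_betw_PiE_insert:
  assumes "x \<notin> S"
  shows "bij_betw (\<lambda>f. (f x, restrict f S)) (\<Pi>\<^sub>E i\<in>insert x S. T i) (T x \<times> (\<Pi>\<^sub>E i\<in>S. T i))"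
proof (rule bij_betw_byWitness[where f' = "\<lambda>(y, g). g(x := y)"])
  show "\<forall>f \<in> \<Pi>\<^sub>E i\<in>insert x S. T i. (\<lambda>(y, g). g(x := y)) (f x, restrict f S) = f"
  proof (intro ballI ext)
    fix f i assume f: "f \<in> (\<Pi>\<^sub>E i\<in>insert x S. T i)"
    show "(\<lambda>(y, g). g(x := y)) (f x, restrict f S) i = f i"
    proof (cases "i \<in> insert x S")
      case False
      then show ?thesis using PiE_arb[OF f False] by simp
    qed auto
  qed
  show "\<forall>z \<in> T x \<times> (\<Pi>\<^sub>E i\<in>S. T i). (\<lambda>f. (f x, restrict f S)) ((\<lambda>(y, g). g(x := y)) z) = z"
  proof (clarsimp)
    fix y g assume "g \<in> (\<Pi>\<^sub>E i\<in>S. T i)"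
    moreover have "restrict (g(x := y)) S = restrict g S" using assms by (intro restrict_ext) auto
    ultimately show "restrict (g(x := y)) S = g" by (simp add: PiE_restrict)
  qed
  show "(\<lambda>f. (f x, restrict f S)) ` (\<Pi>\<^sub>E i\<in>insert x S. T i) \<subseteq> T x \<times> (\<Pi>\<^sub>E i\<in>S. T i)"
    by auto
  show "(\<lambda>(y, g). g(x := y)) ` (T x \<times> (\<Pi>\<^sub>E i\<in>S. T i)) \<subseteq> (\<Pi>\<^sub>E i\<in>insert x S. T i)"
    by (clarsimp simp only: PiE_fun_upd)
qed

lemma product_group_lessThan_Suc_iso:
  assumes "group E"
  shows "product_group {..<Suc n} (\<lambda>_. E) \<cong> E \<times>\<times> product_group {..<n} (\<lambda>_. E)"
proof -
  have "(\<lambda>f. (f n, restrict f {..<n})) \<in> iso (product_group {..<Suc n} (\<lambda>_. E)) (E \<times>\<times> product_group {..<n} (\<lambda>_. E))"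
    using bij_betw_PiE_insert[of n "{..<n}" "\<lambda>_. carrier E"]
    by (intro isoI homI) (auto simp: lessThan_Suc)
  then show ?thesis by (rule is_isoI)
qed

lemma (in group) pow_hom_integer_mod_group:
  assumes "x \<in> carrier G" and "x [^] n = \<one>"
  shows "(\<lambda>i::int. x [^] i) \<in> hom (integer_mod_group n) G"
proof (rule homI)
  fix i j :: int
  have "int (ord x) dvd int n" using assms by (simp add: pow_eq_id)
  also have "int n dvd i + j - (i + j) mod int n" by (simp add: minus_mod_eq_mult_div)
  finally have "x [^] ((i + j) mod int n) = x [^] (i + j)" using assms(1) by (simp add: int_pow_eq)
  then show "x [^] (i \<otimes>\<^bsub>integer_mod_group n\<^esub> j) = x [^] i \<otimes> x [^] j"
    using assms(1) by (simp add: int_pow_mult)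
qed (use assms in simp)

lemma (in comm_group) iso_DirProd_complement:
  assumes E: "group E" and \<phi>: "\<phi> \<in> hom E G" and W: "subgroup W G"
    and independent: "\<And>z w. \<lbrakk>z \<in> carrier E; w \<in> W; \<phi> z \<otimes> w = \<one>\<rbrakk> \<Longrightarrow> z = \<one>\<^bsub>E\<^esub>"
    and spanning: "\<And>v. v \<in> carrier G \<Longrightarrow> \<exists>z\<in>carrier E. \<exists>w\<in>W. v = \<phi> z \<otimes> w"
  shows "E \<times>\<times> G\<lparr>carrier := W\<rparr> \<cong> G"
proof -
  let ?A = "\<phi> ` carrier E"
  interpret \<phi>: group_hom E G \<phi>
    using E \<phi> is_group by (simp add: group_hom_def group_hom_axioms_def)
  interpret group_disjoint_sum G ?A W
    using W \<phi>.img_is_subgroup by (simp add: group_disjoint_sum_def is_group)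
  have "kernel E G \<phi> = {\<one>\<^bsub>E\<^esub>}"
    using independent[OF _ BG.one_closed] by (auto simp: kernel_def)
  then have "\<phi> \<in> iso E (subgroup_generated G ?A)"
    using group.iso_onto_image[OF E is_group] \<phi> \<phi>.inj_iff_trivial_ker by (simp add: mon_def)
  then have "E \<cong> subgroup_generated G ?A" by (rule is_isoI)
  moreover have "G\<lparr>carrier := W\<rparr> \<cong> subgroup_generated G W"
    using W by (intro is_isoI isoI)
      (auto simp: hom_def bij_betw_def subgroup.carrier_subgroup_generated_subgroup)
  ultimately have "E \<times>\<times> G\<lparr>carrier := W\<rparr> \<cong> subgroup_generated G ?A \<times>\<times> subgroup_generated G W"
    using group.DirProd_iso_trans[OF E] by blast
  also have "\<dots> \<cong> G"
  proof -
    have "?A \<inter> W \<subseteq> {\<one>}"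
    proof
      fix v assume v: "v \<in> ?A \<inter> W"
      then obtain z where z: "z \<in> carrier E" "v = \<phi> z" by blast
      then have "z = \<one>\<^bsub>E\<^esub>" using independent[of z "inv v"] v W by (simp add: subgroup.m_inv_closed)
      then show "v \<in> {\<one>}" using z by simp
    qed
    moreover have "?A <#> W = carrier G"
      using spanning AG.subset BG.subset by (fastforce simp: set_mult_def)
    ultimately show ?thesis using iso_group_mul[OF comm_group_axioms] by (auto simp: is_iso_def)
  qed
  finally show ?thesis .
qed

definition orthogonal ::
    "('a, 'b) monoid_scheme \<Rightarrow> ('c, 'd) monoid_scheme \<Rightarrow> ('a \<Rightarrow> 'a \<Rightarrow> 'c) \<Rightarrow> 'a set \<Rightarrow> 'a set"
  where "orthogonal V K B S = {w \<in> carrier V. \<forall>x\<in>S. B x w = \<one>\<^bsub>K\<^esub>}"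

locale symplectic_form = V: group V + K: comm_group K
  for V :: "('a, 'b) monoid_scheme" and K :: "('c, 'd) monoid_scheme" +
  fixes B :: "'a \<Rightarrow> 'a \<Rightarrow> 'c" and p :: nat
  assumes prime_p: "Factorial_Ring.prime p" and card_K: "card (carrier K) = p"
    and B_closed: "\<lbrakk>u \<in> carrier V; v \<in> carrier V\<rbrakk> \<Longrightarrow> B u v \<in> carrier K"
    and B_mult_left: "\<lbrakk>u \<in> carrier V; v \<in> carrier V; w \<in> carrier V\<rbrakk>
      \<Longrightarrow> B (u \<otimes>\<^bsub>V\<^esub> v) w = B u w \<otimes>\<^bsub>K\<^esub> B v w"
    and B_mult_right: "\<lbrakk>u \<in> carrier V; v \<in> carrier V; w \<in> carrier V\<rbrakk>
      \<Longrightarrow> B u (v \<otimes>\<^bsub>V\<^esub> w) = B u v \<otimes>\<^bsub>K\<^esub> B u w"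
    and B_self: "u \<in> carrier V \<Longrightarrow> B u u = \<one>\<^bsub>K\<^esub>"
    and nondegenerate: "\<lbrakk>u \<in> carrier V; \<And>v. v \<in> carrier V \<Longrightarrow> B u v = \<one>\<^bsub>K\<^esub>\<rbrakk> \<Longrightarrow> u = \<one>\<^bsub>V\<^esub>"
begin

lemma group_hom_B_left: "v \<in> carrier V \<Longrightarrow> group_hom V K (\<lambda>u. B u v)"
  by (auto intro!: homI simp: group_hom_def group_hom_axioms_def B_closed B_mult_left
      V.is_group K.is_group)

lemma group_hom_B_right: "u \<in> carrier V \<Longrightarrow> group_hom V K (B u)"
  by (auto intro!: homI simp: group_hom_def group_hom_axioms_def B_closed B_mult_right
      V.is_group K.is_group)

lemma B_one_right [simp]: "u \<in> carrier V \<Longrightarrow> B u \<one>\<^bsub>V\<^esub> = \<one>\<^bsub>K\<^esub>"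
  using group_hom.hom_one[OF group_hom_B_right] by simp

lemma B_inv_left: "\<lbrakk>u \<in> carrier V; v \<in> carrier V\<rbrakk> \<Longrightarrow> B (inv\<^bsub>V\<^esub> u) v = inv\<^bsub>K\<^esub> B u v"
  using group_hom.hom_inv[OF group_hom_B_left] by simp

lemma B_inv_right: "\<lbrakk>u \<in> carrier V; v \<in> carrier V\<rbrakk> \<Longrightarrow> B u (inv\<^bsub>V\<^esub> v) = inv\<^bsub>K\<^esub> B u v"
  using group_hom.hom_inv[OF group_hom_B_right] by simp

lemma B_pow_left: "\<lbrakk>u \<in> carrier V; v \<in> carrier V\<rbrakk> \<Longrightarrow> B (u [^]\<^bsub>V\<^esub> (n::nat)) v = B u v [^]\<^bsub>K\<^esub> n"
  using group_hom.hom_nat_pow[OF group_hom_B_left] by simp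

lemma B_int_pow_right: "\<lbrakk>u \<in> carrier V; v \<in> carrier V\<rbrakk> \<Longrightarrow> B u (v [^]\<^bsub>V\<^esub> (i::int)) = B u v [^]\<^bsub>K\<^esub> i"
  using group_hom.hom_int_pow[OF group_hom_B_right] by simp

lemma B_skew:
  assumes u: "u \<in> carrier V" and v: "v \<in> carrier V"
  shows "B v u = inv\<^bsub>K\<^esub> B u v"
proof -
  have "\<one>\<^bsub>K\<^esub> = B (u \<otimes>\<^bsub>V\<^esub> v) (u \<otimes>\<^bsub>V\<^esub> v)" using u v by (simp add: B_self)
  also have "\<dots> = (B u u \<otimes>\<^bsub>K\<^esub> B v u) \<otimes>\<^bsub>K\<^esub> (B u v \<otimes>\<^bsub>K\<^esub> B v v)"
    using u v by (simp add: B_mult_left B_mult_right)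
  also have "\<dots> = B v u \<otimes>\<^bsub>K\<^esub> B u v" using u v by (simp add: B_self B_closed K.m_comm)
  finally show ?thesis using u v B_closed by (simp add: K.inv_equality)
qed

lemma eq_if_B_eq:
  assumes x: "x \<in> carrier V" and y: "y \<in> carrier V" and B_eq: "\<And>z. z \<in> carrier V \<Longrightarrow> B x z = B y z"
  shows "x = y"
proof -
  have "B (x \<otimes>\<^bsub>V\<^esub> inv\<^bsub>V\<^esub> y) z = \<one>\<^bsub>K\<^esub>" if z: "z \<in> carrier V" for z
    using x y z B_eq[OF z] by (simp add: B_mult_left B_inv_left B_closed)
  then have "x \<otimes>\<^bsub>V\<^esub> inv\<^bsub>V\<^esub> y = \<one>\<^bsub>V\<^esub>" using x y by (intro nondegenerate) simp_all
  then show ?thesis using x y by (metis V.inv_closed V.inv_equality V.inv_inv V.l_inv V.inv_comm)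
qed

lemma V_comm_group: "comm_group V"
  by (rule V.group_comm_groupI, rule eq_if_B_eq) (simp_all add: B_mult_left B_closed K.m_comm)

lemma pow_p_eq_one: "u \<in> carrier V \<Longrightarrow> u [^]\<^bsub>V\<^esub> p = \<one>\<^bsub>V\<^esub>"
  by (rule nondegenerate) (simp_all add: B_pow_left B_closed K.pow_order_eq_1[unfolded order_def card_K])

lemma ord_eq_p:
  assumes "h \<in> carrier K" and "h \<noteq> \<one>\<^bsub>K\<^esub>"
  shows "K.ord h = p"
proof -
  have "K.ord h dvd p" using K.ord_dvd_group_order[OF assms(1)] by (simp add: order_def card_K)
  moreover have "K.ord h \<noteq> 1" using K.ord_eq_1[OF assms(1)] assms(2) by simp
  ultimately show ?thesis using prime_p by (meson prime_nat_iff)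
qed

lemma carrier_K_powers:
  assumes h: "h \<in> carrier K" "h \<noteq> \<one>\<^bsub>K\<^esub>" and k: "k \<in> carrier K"
  shows "\<exists>n<p. k = h [^]\<^bsub>K\<^esub> n"
proof -
  have p_pos: "p > 0" using prime_p prime_gt_0_nat by blast
  have "{0..p - 1} = {..<p}" using p_pos by auto
  then have "inj_on (\<lambda>n. h [^]\<^bsub>K\<^esub> n) {..<p}"
    using K.ord_inj[OF h(1)] ord_eq_p[OF h] by simp
  then have "card ((\<lambda>n. h [^]\<^bsub>K\<^esub> n) ` {..<p}) = card (carrier K)"
    by (simp add: card_image card_K)
  moreover have "finite (carrier K)" using card_K p_pos card_ge_0_finite by auto
  ultimately have "(\<lambda>n. h [^]\<^bsub>K\<^esub> n) ` {..<p} = carrier K"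
    using h(1) by (intro card_subset_eq) auto
  then show ?thesis using k by auto
qed

lemma subgroup_orthogonal: "S \<subseteq> carrier V \<Longrightarrow> subgroup (orthogonal V K B S) V"
  by (rule V.subgroupI) (auto simp: orthogonal_def B_mult_right B_inv_right subset_iff)

lemma hyperbolic_pair_independent:
  assumes u: "u \<in> carrier V" and v: "v \<in> carrier V" and h: "B u v \<noteq> \<one>\<^bsub>K\<^esub>"
    and ij: "(i, j) \<in> carrier (integer_mod_group p \<times>\<times> integer_mod_group p)"
    and w: "w \<in> orthogonal V K B {u, v}"
    and eq: "u [^]\<^bsub>V\<^esub> i \<otimes>\<^bsub>V\<^esub> v [^]\<^bsub>V\<^esub> j \<otimes>\<^bsub>V\<^esub> w = \<one>\<^bsub>V\<^esub>"
  shows "i = 0 \<and> j = 0"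
proof -
  let ?h = "B u v"
  have hc: "?h \<in> carrier K" using u v by (rule B_closed)
  have wc: "w \<in> carrier V" "B u w = \<one>\<^bsub>K\<^esub>" "B v w = \<one>\<^bsub>K\<^esub>" using w by (simp_all add: orthogonal_def)
  have "\<one>\<^bsub>K\<^esub> = B u (u [^]\<^bsub>V\<^esub> i \<otimes>\<^bsub>V\<^esub> v [^]\<^bsub>V\<^esub> j \<otimes>\<^bsub>V\<^esub> w)" using u eq by simp
  also have "\<dots> = ?h [^]\<^bsub>K\<^esub> j" using u v wc hc by (simp add: B_mult_right B_int_pow_right B_self)
  finally have "?h [^]\<^bsub>K\<^esub> j = \<one>\<^bsub>K\<^esub>" by (rule sym)
  then have "int p dvd j" using K.int_pow_eq_id[OF hc] ord_eq_p[OF hc h] by simp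
  moreover have "\<one>\<^bsub>K\<^esub> = B v (u [^]\<^bsub>V\<^esub> i \<otimes>\<^bsub>V\<^esub> v [^]\<^bsub>V\<^esub> j \<otimes>\<^bsub>V\<^esub> w)" using v eq by simp
  then have "inv\<^bsub>K\<^esub> (?h [^]\<^bsub>K\<^esub> i) = \<one>\<^bsub>K\<^esub>"
    using u v wc hc by (simp add: B_mult_right B_int_pow_right B_self B_skew[OF u v] K.int_pow_inv)
  then have "int p dvd i" using K.int_pow_eq_id[OF hc] ord_eq_p[OF hc h] hc by (metis K.inv_eq_1_iff K.int_pow_closed)
  moreover have "0 \<le> i" "i < int p" "0 \<le> j" "j < int p"
    using ij prime_gt_0_nat[OF prime_p] by (simp_all add: carrier_integer_mod_group)
  moreover have "k = 0" if "int p dvd k" "0 \<le> k" "k < int p" for k :: int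
    using that by (cases "k = 0") (auto dest: zdvd_imp_le)
  ultimately show ?thesis by blast
qed

lemma hyperbolic_pair_spanning:
  assumes u: "u \<in> carrier V" and v: "v \<in> carrier V" and h: "B u v \<noteq> \<one>\<^bsub>K\<^esub>" and z: "z \<in> carrier V"
  shows "\<exists>(i, j) \<in> carrier (integer_mod_group p \<times>\<times> integer_mod_group p). \<exists>w \<in> orthogonal V K B {u, v}.
    z = u [^]\<^bsub>V\<^esub> i \<otimes>\<^bsub>V\<^esub> v [^]\<^bsub>V\<^esub> j \<otimes>\<^bsub>V\<^esub> w"
proof -
  interpret V: comm_group V by (rule V_comm_group)
  let ?h = "B u v"
  have hc: "?h \<in> carrier K" using u v by (rule B_closed)
  obtain b where b: "b < p" "B u z = ?h [^]\<^bsub>K\<^esub> int b"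
    using carrier_K_powers[OF hc h B_closed[OF u z]] by (auto simp: int_pow_int)
  obtain a where "a < p" "inv\<^bsub>K\<^esub> B v z = ?h [^]\<^bsub>K\<^esub> a"
    using carrier_K_powers[OF hc h K.inv_closed[OF B_closed[OF v z]]] by blast
  then have a: "a < p" "B v z = inv\<^bsub>K\<^esub> (?h [^]\<^bsub>K\<^esub> int a)"
    using B_closed[OF v z] by (metis K.inv_inv int_pow_int)+
  define t where "t = u [^]\<^bsub>V\<^esub> int a \<otimes>\<^bsub>V\<^esub> v [^]\<^bsub>V\<^esub> int b"
  define w where "w = z \<otimes>\<^bsub>V\<^esub> inv\<^bsub>V\<^esub> t"
  have t: "t \<in> carrier V" using u v by (simp add: t_def)
  have "B u t = ?h [^]\<^bsub>K\<^esub> int b" using u v hc by (simp add: t_def B_mult_right B_int_pow_right B_self)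
  then have "B u w = \<one>\<^bsub>K\<^esub>" using u z t b hc by (simp add: w_def B_mult_right B_inv_right)
  moreover have "B v t = inv\<^bsub>K\<^esub> (?h [^]\<^bsub>K\<^esub> int a)"
    using u v hc by (simp add: t_def B_mult_right B_int_pow_right B_self B_skew[OF u v] K.int_pow_inv)
  then have "B v w = \<one>\<^bsub>K\<^esub>" using v z t a hc by (simp add: w_def B_mult_right B_inv_right)
  moreover have "w \<in> carrier V" using z t by (simp add: w_def)
  moreover have "z = t \<otimes>\<^bsub>V\<^esub> w" using z t by (simp add: w_def V.m_lcomm[of t z])
  moreover have "(int a, int b) \<in> carrier (integer_mod_group p \<times>\<times> integer_mod_group p)"
    using a(1) b(1) by (simp add: carrier_integer_mod_group)
  ultimately show ?thesis unfolding t_def by (auto simp: orthogonal_def)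
qed

lemma symplectic_form_orthogonal_hyperbolic_pair:
  assumes u: "u \<in> carrier V" and v: "v \<in> carrier V" and h: "B u v \<noteq> \<one>\<^bsub>K\<^esub>"
  shows "symplectic_form (V\<lparr>carrier := orthogonal V K B {u, v}\<rparr>) K B p"
proof -
  let ?W = "orthogonal V K B {u, v}"
  have W: "subgroup ?W V" using u v by (intro subgroup_orthogonal) auto
  have W_sub: "?W \<subseteq> carrier V" by (auto simp: orthogonal_def)
  show ?thesis
  proof (intro symplectic_form.intro symplectic_form_axioms.intro V.subgroup_imp_group[OF W]
      K.comm_group_axioms prime_p card_K)
    fix x assume x: "x \<in> carrier (V\<lparr>carrier := ?W\<rparr>)"
      and radical: "\<And>y. y \<in> carrier (V\<lparr>carrier := ?W\<rparr>) \<Longrightarrow> B x y = \<one>\<^bsub>K\<^esub>"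
    have xc: "x \<in> carrier V" using x W_sub by auto
    have "B x u = \<one>\<^bsub>K\<^esub>" "B x v = \<one>\<^bsub>K\<^esub>"
      using x by (simp_all add: orthogonal_def B_skew[OF u xc] B_skew[OF v xc])
    then have "B x z = \<one>\<^bsub>K\<^esub>" if "z \<in> carrier V" for z
      using hyperbolic_pair_spanning[OF u v h that] u v xc W_sub radical
      by (auto simp: B_mult_right B_int_pow_right subset_iff)
    then have "x = \<one>\<^bsub>V\<^esub>" by (rule nondegenerate[OF xc])
    then show "x = \<one>\<^bsub>V\<lparr>carrier := ?W\<rparr>\<^esub>" by simp
  qed (use W_sub in \<open>auto simp: B_closed B_mult_left B_mult_right B_self subset_iff\<close>)
qed

lemma iso_DirProd_orthogonal_hyperbolic_pair:
  assumes u: "u \<in> carrier V" and v: "v \<in> carrier V" and h: "B u v \<noteq> \<one>\<^bsub>K\<^esub>"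
  shows "(integer_mod_group p \<times>\<times> integer_mod_group p) \<times>\<times> V\<lparr>carrier := orthogonal V K B {u, v}\<rparr> \<cong> V"
proof (rule comm_group.iso_DirProd_complement[OF V_comm_group])
  let ?\<phi> = "\<lambda>(i, j). u [^]\<^bsub>V\<^esub> (i::int) \<otimes>\<^bsub>V\<^esub> v [^]\<^bsub>V\<^esub> (j::int)"
  show "group (integer_mod_group p \<times>\<times> integer_mod_group p)" by (simp add: DirProd_group)
  show "subgroup (orthogonal V K B {u, v}) V" using u v by (intro subgroup_orthogonal) auto
  have "u [^]\<^bsub>V\<^esub> p = \<one>\<^bsub>V\<^esub>" "v [^]\<^bsub>V\<^esub> p = \<one>\<^bsub>V\<^esub>" using u v by (simp_all add: pow_p_eq_one)
  then have "(\<lambda>z. ((\<lambda>i::int. u [^]\<^bsub>V\<^esub> i) \<circ> fst) z \<otimes>\<^bsub>V\<^esub> ((\<lambda>j::int. v [^]\<^bsub>V\<^esub> j) \<circ> snd) z)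
      \<in> hom (integer_mod_group p \<times>\<times> integer_mod_group p) V"
    using hom_of_fst[THEN iffD2, OF group_integer_mod_group V.pow_hom_integer_mod_group[OF u]]
      hom_of_snd[THEN iffD2, OF group_integer_mod_group V.pow_hom_integer_mod_group[OF v]]
    by (intro comm_group.hom_group_mult[OF V_comm_group])
  then show "?\<phi> \<in> hom (integer_mod_group p \<times>\<times> integer_mod_group p) V"
    by (simp add: case_prod_beta' comp_def)
  show "z = \<one>\<^bsub>integer_mod_group p \<times>\<times> integer_mod_group p\<^esub>"
    if "z \<in> carrier (integer_mod_group p \<times>\<times> integer_mod_group p)" "w \<in> orthogonal V K B {u, v}"
      "?\<phi> z \<otimes>\<^bsub>V\<^esub> w = \<one>\<^bsub>V\<^esub>" for z w
    using that hyperbolic_pair_independent[OF u v h] by (cases z) auto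
  show "\<exists>z\<in>carrier (integer_mod_group p \<times>\<times> integer_mod_group p). \<exists>w\<in>orthogonal V K B {u, v}. x = ?\<phi> z \<otimes>\<^bsub>V\<^esub> w"
    if "x \<in> carrier V" for x
    using hyperbolic_pair_spanning[OF u v h that] by auto
qed

end

lemma product_group_empty_iso_trivial:
  assumes "group G" and "carrier G = {\<one>\<^bsub>G\<^esub>}"
  shows "product_group {} H \<cong> G"
proof -
  interpret group G by (rule assms(1))
  have "(\<lambda>_. \<one>\<^bsub>G\<^esub>) \<in> iso (product_group {} H) G"
    using assms(2) by (intro isoI homI) (auto simp: bij_betw_def inj_on_def PiE_empty_domain)
  then show ?thesis by (rule is_isoI)
qed

lemma card_product_integer_mod_group_pairs:
  assumes "p > 0"
  shows "card (carrier (product_group {..<s} (\<lambda>_. integer_mod_group p \<times>\<times> integer_mod_group p))) = p ^ (2 * s)"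
  using assms by (simp add: card_PiE carrier_integer_mod_group power_mult power2_eq_square)

text \<open>Subgroups appear as \<open>V\<lparr>carrier := W\<rparr>\<close> rather than \<open>subgroup_generated V W\<close> so that the
  induction over \<open>V\<close> stays within the type of \<open>V\<close>.\<close>

theorem symplectic_form_iso_product_integer_mod_group_pairs:
  assumes "symplectic_form V K B p" and "finite (carrier V)"
  shows "\<exists>s::nat. product_group {..<s} (\<lambda>_. integer_mod_group p \<times>\<times> integer_mod_group p) \<cong> V"
  using assms
proof (induction "card (carrier V)" arbitrary: V rule: less_induct)
  case less
  interpret symplectic_form V K B p by (rule less.prems(1))
  let ?E = "integer_mod_group p \<times>\<times> integer_mod_group p"
  show ?case
  proof (cases "carrier V = {\<one>\<^bsub>V\<^esub>}")
    case True
    then have "product_group {..<0::nat} (\<lambda>_. ?E) \<cong> V"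
      using product_group_empty_iso_trivial[OF V.is_group True] by simp
    then show ?thesis by blast
  next
    case False
    then obtain u where u: "u \<in> carrier V" "u \<noteq> \<one>\<^bsub>V\<^esub>" using V.one_closed by blast
    then obtain v where v: "v \<in> carrier V" "B u v \<noteq> \<one>\<^bsub>K\<^esub>" using nondegenerate by blast
    let ?W = "orthogonal V K B {u, v}"
    have W_sub: "?W \<subseteq> carrier V" by (auto simp: orthogonal_def)
    have "u \<notin> ?W" using u v B_skew[OF u(1) v(1)] B_closed[OF u(1) v(1)]
      by (auto simp: orthogonal_def)
    then have "card ?W < card (carrier V)"
      using u less.prems(2) W_sub by (intro psubset_card_mono) auto
    moreover have "finite ?W" using less.prems(2) W_sub finite_subset by blast
    ultimately obtain s :: nat where s: "product_group {..<s} (\<lambda>_. ?E) \<cong> V\<lparr>carrier := ?W\<rparr>"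
      using less.hyps[OF _ symplectic_form_orthogonal_hyperbolic_pair[OF u(1) v(1,2)]] by auto
    have E: "group ?E" by (simp add: DirProd_group)
    have "product_group {..<Suc s} (\<lambda>_. ?E) \<cong> ?E \<times>\<times> product_group {..<s} (\<lambda>_. ?E)"
      using E by (rule product_group_lessThan_Suc_iso)
    also have "\<dots> \<cong> ?E \<times>\<times> V\<lparr>carrier := ?W\<rparr>"
      using group.DirProd_iso_trans[OF E iso_refl s] .
    also have "\<dots> \<cong> V" by (rule iso_DirProd_orthogonal_hyperbolic_pair[OF u(1) v])
    finally show ?thesis by blast
  qed
qed

section \<open>Commutators\<close>

text \<open>The same convention as for the generators of \<open>derived\<close>.\<close>

definition commutator :: "('a, 'b) monoid_scheme \<Rightarrow> 'a \<Rightarrow> 'a \<Rightarrow> 'a" where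
  "commutator G x y = x \<otimes>\<^bsub>G\<^esub> y \<otimes>\<^bsub>G\<^esub> inv\<^bsub>G\<^esub> x \<otimes>\<^bsub>G\<^esub> inv\<^bsub>G\<^esub> y"

context group
begin

lemma commutator_closed [simp]: "\<lbrakk>x \<in> carrier G; y \<in> carrier G\<rbrakk> \<Longrightarrow> commutator G x y \<in> carrier G"
  by (simp add: commutator_def)

lemma commutator_in_derived:
  "\<lbrakk>x \<in> carrier G; y \<in> carrier G\<rbrakk> \<Longrightarrow> commutator G x y \<in> derived G (carrier G)"
  unfolding derived_def commutator_def by (rule generate.incl) blast

lemma mult_eq_commutator_mult:
  "\<lbrakk>x \<in> carrier G; y \<in> carrier G\<rbrakk> \<Longrightarrow> x \<otimes> y = commutator G x y \<otimes> (y \<otimes> x)"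
  by (simp add: commutator_def m_assoc)

lemma commutator_eq_one_iff:
  "\<lbrakk>x \<in> carrier G; y \<in> carrier G\<rbrakk> \<Longrightarrow> commutator G x y = \<one> \<longleftrightarrow> x \<otimes> y = y \<otimes> x"
  by (metis mult_eq_commutator_mult commutator_closed l_one m_closed r_cancel_one')

lemma commutator_swap:
  "\<lbrakk>x \<in> carrier G; y \<in> carrier G\<rbrakk> \<Longrightarrow> commutator G y x = inv (commutator G x y)"
  by (simp add: commutator_def inv_mult_group m_assoc)

lemma commutator_conj:
  "\<lbrakk>g \<in> carrier G; x \<in> carrier G; y \<in> carrier G\<rbrakk>
    \<Longrightarrow> g \<otimes> commutator G x y \<otimes> inv g = commutator G (g \<otimes> x \<otimes> inv g) (g \<otimes> y \<otimes> inv g)"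
  by (simp add: commutator_def inv_mult_group m_assoc)

lemma commutator_mult_left:
  assumes x: "x \<in> carrier G" and y: "y \<in> carrier G" and w: "w \<in> carrier G"
    and central: "commutator G y w \<in> center G"
  shows "commutator G (x \<otimes> y) w = commutator G x w \<otimes> commutator G y w"
proof -
  let ?a = "commutator G x w" and ?b = "commutator G y w"
  have ab: "?a \<in> carrier G" "?b \<in> carrier G" using x y w by simp_all
  have "x \<otimes> ?b = ?b \<otimes> x" using x central by (simp add: center_def)
  then have b_x: "x \<otimes> (?b \<otimes> z) = ?b \<otimes> (x \<otimes> z)" if "z \<in> carrier G" for z
    using that x ab by (metis m_assoc)
  have "x \<otimes> y \<otimes> w = x \<otimes> (?b \<otimes> (w \<otimes> y))"
    using x y w by (simp add: m_assoc mult_eq_commutator_mult[OF y w])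
  also have "\<dots> = ?b \<otimes> (x \<otimes> w) \<otimes> y"
    using x y w ab by (simp add: m_assoc b_x)
  also have "\<dots> = ?b \<otimes> ?a \<otimes> (w \<otimes> (x \<otimes> y))"
    using x y w ab by (simp add: m_assoc mult_eq_commutator_mult[OF x w])
  also have "?b \<otimes> ?a = ?a \<otimes> ?b" using ab central by (simp add: center_def)
  finally show ?thesis
    using x y w ab by (metis mult_eq_commutator_mult m_closed commutator_closed r_cancel)
qed

lemma commutator_mult_right:
  assumes x: "x \<in> carrier G" and y: "y \<in> carrier G" and w: "w \<in> carrier G"
    and central: "commutator G x w \<in> center G"
  shows "commutator G x (y \<otimes> w) = commutator G x y \<otimes> commutator G x w"
proof -
  have "commutator G w x \<in> center G"
    using x w central commutator_swap[OF x w] subgroup.m_inv_closed[OF center_subgroup] by simp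
  then have "commutator G x (y \<otimes> w) = inv (commutator G y x \<otimes> commutator G w x)"
    using x y w commutator_swap[of "y \<otimes> w" x] commutator_mult_left[OF y w x] by simp
  also have "\<dots> = commutator G x w \<otimes> commutator G x y"
    using x y w by (simp add: inv_mult_group commutator_swap[OF x y] commutator_swap[OF x w])
  also have "\<dots> = commutator G x y \<otimes> commutator G x w"
    using x y w central by (simp add: center_def)
  finally show ?thesis .
qed

lemma commutator_mult_commuting:
  assumes carrier: "x \<in> carrier G" "y \<in> carrier G" "d \<in> carrier G" "e \<in> carrier G"
    and "d \<otimes> y = y \<otimes> d" "d \<otimes> e = e \<otimes> d" "e \<otimes> x = x \<otimes> e"
  shows "commutator G (x \<otimes> d) (y \<otimes> e) = commutator G x y"
proof -
  have "e \<otimes> inv x = inv x \<otimes> e" using carrier assms(7) by (simp add: commute_inv_left)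
  then have "d \<otimes> (y \<otimes> z) = y \<otimes> (d \<otimes> z)" "d \<otimes> (e \<otimes> z) = e \<otimes> (d \<otimes> z)"
      "e \<otimes> (inv x \<otimes> z) = inv x \<otimes> (e \<otimes> z)" if "z \<in> carrier G" for z
    using that carrier assms(5,6) by (metis inv_closed m_assoc)+
  then show ?thesis using carrier by (simp add: commutator_def inv_mult_group m_assoc)
qed

lemma centralizer_normal_conj_closed:
  assumes N: "N \<lhd> G" and g: "g \<in> carrier G" and c: "c \<in> centralizer G N"
  shows "g \<otimes> c \<otimes> inv g \<in> centralizer G N"
proof -
  have cc: "c \<in> carrier G" using c by (simp add: centralizer_def)
  have "g \<otimes> c \<otimes> inv g \<otimes> n = n \<otimes> (g \<otimes> c \<otimes> inv g)" if n: "n \<in> N" for n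
  proof -
    have n': "inv g \<otimes> n \<otimes> g \<in> N" using N g n by (metis inv_closed inv_inv normal_inv_iff)
    have nc: "n \<in> carrier G" using subgroup.subset[OF normal_imp_subgroup[OF N]] n by blast
    have "c \<otimes> (inv g \<otimes> n \<otimes> g) = (inv g \<otimes> n \<otimes> g) \<otimes> c" using c n' by (simp add: centralizer_def)
    then have "g \<otimes> (c \<otimes> (inv g \<otimes> n \<otimes> g)) \<otimes> inv g = g \<otimes> ((inv g \<otimes> n \<otimes> g) \<otimes> c) \<otimes> inv g"
      by simp
    then show ?thesis using g cc nc by (simp add: m_assoc)
  qed
  then show ?thesis using g cc by (simp add: centralizer_def)
qed

text \<open>Conjugation by \<open>g\<close> multiplies \<open>x\<close> and \<open>y\<close> by factors from \<open>G' \<inter> C\<close>, which commute with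
  everything involved, so it fixes \<open>[x, y]\<close>.\<close>

lemma commutator_centralizer_derived_in_center:
  assumes x: "x \<in> centralizer G (derived G (carrier G))" and y: "y \<in> centralizer G (derived G (carrier G))"
  shows "commutator G x y \<in> center G"
proof -
  let ?D = "derived G (carrier G)" and ?C = "centralizer G (derived G (carrier G))"
  have D_normal: "?D \<lhd> G" by (simp add: derived_is_normal normal_self)
  have C: "subgroup ?C G"
    using D_normal by (intro centralizer_subgroup) (simp add: normal_imp_subgroup subgroup.subset)
  have xc: "x \<in> carrier G" and yc: "y \<in> carrier G" using x y by (auto simp: centralizer_def)
  have commute: "c \<otimes> d = d \<otimes> c" if "c \<in> ?C" "d \<in> ?D" for c d
    using that by (simp add: centralizer_def)
  have "g \<otimes> commutator G x y \<otimes> inv g = commutator G x y" if g: "g \<in> carrier G" for g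
  proof -
    define d1 where "d1 = inv x \<otimes> (g \<otimes> x \<otimes> inv g)"
    define d2 where "d2 = inv y \<otimes> (g \<otimes> y \<otimes> inv g)"
    have "d1 = commutator G (inv x) g" "d2 = commutator G (inv y) g"
      using g xc yc by (simp_all add: d1_def d2_def commutator_def m_assoc)
    then have d_D: "d1 \<in> ?D" "d2 \<in> ?D" using g xc yc by (simp_all add: commutator_in_derived)
    have "d1 \<in> ?C"
      using x g C centralizer_normal_conj_closed[OF D_normal g x]
      by (simp add: d1_def subgroup.m_closed subgroup.m_inv_closed)
    have "g \<otimes> commutator G x y \<otimes> inv g = commutator G (x \<otimes> d1) (y \<otimes> d2)"
      using g xc yc commutator_conj[OF g xc yc] by (simp add: d1_def d2_def m_assoc)
    also have "\<dots> = commutator G x y"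
      using commute[OF y d_D(1)] commute[OF \<open>d1 \<in> ?C\<close> d_D(2)] commute[OF x d_D(2)]
        d_D xc yc subgroup.mem_carrier[OF normal_imp_subgroup[OF D_normal]]
      by (intro commutator_mult_commuting) auto
    finally show ?thesis .
  qed
  moreover have "g \<otimes> commutator G x y \<otimes> inv g \<otimes> g = g \<otimes> commutator G x y" if "g \<in> carrier G" for g
    using that xc yc by (simp add: m_assoc)
  ultimately have "commutator G x y \<otimes> g = g \<otimes> commutator G x y" if "g \<in> carrier G" for g
    using that by metis
  then show ?thesis using xc yc by (simp add: center_def)
qed

end

section \<open>The centralizer of the derived subgroup\<close>

locale derived_center_of_prime_order = group G for G (structure) +
  fixes p :: nat
  assumes finite_carrier: "finite (carrier G)" and prime_p: "Factorial_Ring.prime p"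
    and card_derived_center: "card (derived G (carrier G) \<inter> center G) = p"
begin

abbreviation "C \<equiv> centralizer G (derived G (carrier G))"
abbreviation "CG \<equiv> G\<lparr>carrier := C\<rparr>"
abbreviation "K \<equiv> G\<lparr>carrier := derived G (carrier G) \<inter> center G\<rparr>"

lemma subgroup_C: "subgroup C G"
  by (intro centralizer_subgroup subgroup.subset derived_is_subgroup subgroup_self)

lemma group_CG: "group CG"
  using subgroup_C by (rule subgroup_imp_group)

lemma C_carrier: "c \<in> C \<Longrightarrow> c \<in> carrier G"
  by (simp add: centralizer_def)

lemma center_CG: "center CG = {z \<in> C. \<forall>c\<in>C. z \<otimes> c = c \<otimes> z}"
  by (simp add: center_def)

lemma comm_group_K: "comm_group K"
proof -
  interpret K: group K
    by (intro subgroup_imp_group subgroups_Inter_pair derived_is_subgroup center_subgroup) simp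
  show ?thesis
  proof (rule K.group_comm_groupI)
    fix x y assume "x \<in> carrier K" "y \<in> carrier K"
    then have "x \<in> center G" "y \<in> carrier G" by (simp_all add: center_def)
    then show "x \<otimes>\<^bsub>K\<^esub> y = y \<otimes>\<^bsub>K\<^esub> x" by (simp add: center_def)
  qed
qed

lemma commutator_C_in_K:
  assumes "x \<in> C" and "y \<in> C"
  shows "commutator G x y \<in> derived G (carrier G)" and "commutator G x y \<in> center G"
  using assms by (simp_all add: commutator_in_derived commutator_centralizer_derived_in_center C_carrier)

lemma commutator_C_mult_left:
  "\<lbrakk>x \<in> C; y \<in> C; w \<in> C\<rbrakk> \<Longrightarrow> commutator G (x \<otimes> y) w = commutator G x w \<otimes> commutator G y w"
  by (simp add: commutator_mult_left commutator_centralizer_derived_in_center C_carrier)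

lemma commutator_C_mult_right:
  "\<lbrakk>x \<in> C; y \<in> C; w \<in> C\<rbrakk> \<Longrightarrow> commutator G x (y \<otimes> w) = commutator G x y \<otimes> commutator G x w"
  by (simp add: commutator_mult_right commutator_centralizer_derived_in_center C_carrier)

abbreviation "Z \<equiv> center CG"
abbreviation "Q \<equiv> CG Mod Z"

definition commutator_pairing :: "'a set \<Rightarrow> 'a set \<Rightarrow> 'a" where
  "commutator_pairing U W = the_elem ((\<lambda>(u, w). commutator G u w) ` (U \<times> W))"

lemma Z_normal: "Z \<lhd> CG"
  using group_CG by (rule group.center_normal)

lemma carrier_Q: "carrier Q = (\<lambda>a. Z #> a) ` C"
  by (auto simp: FactGroup_def RCOSETS_def)

lemma rcos_mult_Z: "\<lbrakk>a \<in> C; b \<in> C\<rbrakk> \<Longrightarrow> (Z #> a) <#> (Z #> b) = Z #> (a \<otimes> b)"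
  using normal.rcos_sum[OF Z_normal] by simp

lemma commutator_pairing_rcos:
  assumes a: "a \<in> C" and b: "b \<in> C"
  shows "commutator_pairing (Z #> a) (Z #> b) = commutator G a b"
proof -
  have "commutator G (z \<otimes> a) (z' \<otimes> b) = commutator G a b" if "z \<in> Z" "z' \<in> Z" for z z'
  proof -
    have z: "z \<in> C" "z' \<in> C" using that by (simp_all add: center_CG)
    have comm: "z \<otimes> c = c \<otimes> z" "z' \<otimes> c = c \<otimes> z'" if "c \<in> C" for c
      using that \<open>z \<in> Z\<close> \<open>z' \<in> Z\<close> by (simp_all add: center_CG)
    have "commutator G (z \<otimes> a) (z' \<otimes> b) = commutator G (a \<otimes> z) (b \<otimes> z')"
      using comm(1)[OF a] comm(2)[OF b] by simp
    also have "\<dots> = commutator G a b"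
      by (rule commutator_mult_commuting[OF _ _ _ _ comm(1)[OF b] comm(1)[OF z(2)] comm(2)[OF a]])
        (use a b z C_carrier in auto)
    finally show ?thesis .
  qed
  moreover have "\<one> \<in> Z" using subgroup.one_closed[OF group.center_subgroup[OF group_CG]] by simp
  ultimately have "(\<lambda>(u, w). commutator G u w) ` ((Z #> a) \<times> (Z #> b)) = {commutator G a b}"
    using a b C_carrier by (auto simp: r_coset_def image_iff)
  then show ?thesis by (simp add: commutator_pairing_def)
qed

lemma symplectic_form_Q: "symplectic_form Q K commutator_pairing p"
proof (intro symplectic_form.intro symplectic_form_axioms.intro comm_group_K prime_p)
  show "group Q" using Z_normal by (rule normal.factorgroup_is_group)
  show "card (carrier K) = p" by (simp add: card_derived_center)
next
  fix U W assume "U \<in> carrier Q" "W \<in> carrier Q"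
  then show "commutator_pairing U W \<in> carrier K"
    by (auto simp: carrier_Q commutator_pairing_rcos commutator_C_in_K)
next
  fix U W Y assume "U \<in> carrier Q" "W \<in> carrier Q" "Y \<in> carrier Q"
  then show "commutator_pairing (U \<otimes>\<^bsub>Q\<^esub> W) Y = commutator_pairing U Y \<otimes>\<^bsub>K\<^esub> commutator_pairing W Y"
    and "commutator_pairing U (W \<otimes>\<^bsub>Q\<^esub> Y) = commutator_pairing U W \<otimes>\<^bsub>K\<^esub> commutator_pairing U Y"
    using subgroup.m_closed[OF subgroup_C]
    by (auto simp: carrier_Q rcos_mult_Z commutator_pairing_rcos commutator_C_mult_left commutator_C_mult_right)
next
  fix U assume "U \<in> carrier Q"
  then show "commutator_pairing U U = \<one>\<^bsub>K\<^esub>"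
    by (auto simp: carrier_Q commutator_pairing_rcos commutator_def C_carrier m_assoc)
next
  fix U assume U: "U \<in> carrier Q"
    and radical: "\<And>W. W \<in> carrier Q \<Longrightarrow> commutator_pairing U W = \<one>\<^bsub>K\<^esub>"
  obtain a where a: "a \<in> C" "U = Z #> a" using U by (auto simp: carrier_Q)
  have "commutator G a b = \<one>" if "b \<in> C" for b
    using radical[of "Z #> b"] a that by (simp add: carrier_Q commutator_pairing_rcos)
  then have "a \<in> Z" using a C_carrier by (simp add: center_CG commutator_eq_one_iff)
  then show "U = \<one>\<^bsub>Q\<^esub>"
    using a subgroup.rcos_const[OF group.center_subgroup[OF group_CG] group_CG] by simp
qed

text \<open>For \<open>x \<notin> Z\<close> the map \<open>y \<mapsto> [x, y]\<close> is a homomorphism from \<open>C\<close> onto the group \<open>K\<close> of prime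
  order, with kernel the centralizer of \<open>x\<close>.\<close>

lemma card_centralizer_noncentral:
  assumes x: "x \<in> C - Z"
  shows "p * card (centralizer CG {x}) = card C"
proof -
  interpret CG: group CG by (rule group_CG)
  interpret K: comm_group K by (rule comm_group_K)
  interpret f: group_hom CG K "commutator G x"
    using x by unfold_locales
      (auto intro!: homI simp: commutator_C_in_K commutator_C_mult_right)
  have "commutator G x y = \<one> \<longleftrightarrow> y \<otimes> x = x \<otimes> y" if "y \<in> C" for y
    using that x C_carrier by (metis commutator_eq_one_iff DiffD1)
  then have kernel: "kernel CG K (commutator G x) = centralizer CG {x}"
    by (auto simp: kernel_def centralizer_def)
  have "simple_group K"
    using prime_p card_derived_center by (intro K.prime_order_simple) (simp add: order_def)
  then have "commutator G x ` C = carrier K \<or> commutator G x ` C = {\<one>\<^bsub>K\<^esub>}"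
    using simple_group.no_real_normal_subgroup K.subgroup_imp_normal[OF f.img_is_subgroup] by fastforce
  moreover obtain c where "c \<in> C" "x \<otimes> c \<noteq> c \<otimes> x" using x by (auto simp: center_CG)
  then have "commutator G x c \<noteq> \<one>" using x by (simp add: commutator_eq_one_iff C_carrier)
  ultimately have "commutator G x ` C = carrier K" using \<open>c \<in> C\<close> by auto
  then have "CG Mod kernel CG K (commutator G x) \<cong> K" by (intro f.FactGroup_iso) simp
  then have "card (rcosets\<^bsub>CG\<^esub> kernel CG K (commutator G x)) = p"
    using iso_same_card card_derived_center by (fastforce simp: FactGroup_def)
  then show ?thesis
    using CG.lagrange[OF f.subgroup_kernel] by (simp add: kernel order_def)
qed

lemma finite_C: "finite C"
  using finite_carrier subgroup.subset[OF subgroup_C] by (rule finite_subset[rotated])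

lemma card_C: "card C = card (carrier Q) * card Z"
  using group.lagrange[OF group_CG group.center_subgroup[OF group_CG]]
  by (simp add: FactGroup_def order_def)

lemma comm_group_CG_if_center_eq: "Z = C \<Longrightarrow> comm_group CG"
  by (rule group.group_comm_groupI[OF group_CG]) (auto simp: center_CG)

end

theorem lemma3p1:
  fixes G :: "('a, 'b) monoid_scheme" and p :: nat
  assumes "group G" and "finite (carrier G)" and "Factorial_Ring.prime p"
    and "card (derived G (carrier G) \<inter> center G) = p"
    and "\<not> comm_group (G\<lparr>carrier := centralizer G (derived G (carrier G))\<rparr>)"
  shows "\<exists>s::nat. s > 0 \<and>
    (let C = G\<lparr>carrier := centralizer G (derived G (carrier G))\<rparr> in
      (C Mod center C) \<cong> product_group {..<s} (\<lambda>_. integer_mod_group p \<times>\<times> integer_mod_group p)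
      \<and> comm_prob C = 1 / real p * (1 + (real p - 1) / real p ^ (2 * s)))"
proof -
  interpret derived_center_of_prime_order G p
    using assms by (simp add: derived_center_of_prime_order_def derived_center_of_prime_order_axioms_def)
  let ?E = "integer_mod_group p \<times>\<times> integer_mod_group p"
  have p_pos: "p > 0" using prime_p prime_gt_0_nat by blast
  obtain s :: nat where iso: "product_group {..<s} (\<lambda>_. ?E) \<cong> Q"
    using symplectic_form_iso_product_integer_mod_group_pairs[OF symplectic_form_Q] finite_C
    by (auto simp: carrier_Q)
  have index_Z: "card C = p ^ (2 * s) * card Z"
    using card_C iso_same_card[OF iso] card_product_integer_mod_group_pairs[OF p_pos] by simp
  have "s > 0"
  proof (rule ccontr)
    assume "\<not> s > 0"
    then have "Z = C" using index_Z finite_C by (intro card_subset_eq) (auto simp: center_CG)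
    then show False using assms(5) comm_group_CG_if_center_eq by simp
  qed
  moreover have "Q \<cong> product_group {..<s} (\<lambda>_. ?E)"
    using iso by (simp add: group.iso_sym DirProd_group)
  moreover have "comm_prob CG = 1 / real p * (1 + (real p - 1) / real (p ^ (2 * s)))"
    using group_CG finite_C p_pos card_centralizer_noncentral index_Z
    by (intro comm_prob_from_centralizer_index) simp_all
  ultimately show ?thesis by (auto simp: Let_def)
qed

end
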